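(* Let $R$ be an indecomposable commutative unital ring, $X$ a locally compact Hausdorff zero-dimensional space, and $S$ an inverse semigroup. If $\alpha=(\{D_s\}_{s\in S},\{\alpha_s\}_{s\in S})$ is an algebraic partial action of $S$ on $A_R(X)$ such that each ideal $D_s$ has local units, then there is a topological partial action $\theta=(\{X_s\}_{s\in S},\{\theta_s\}_{s\in S})$ of $S$ on $X$ such that $\alpha$ is the dual partial action of $\theta$.
   Context: $A_R(X)$ is the $R$-algebra of locally constant compactly supported functions $X\to R$ with pointwise operations. $R$ is indecomposable if its only idempotents are $0,1$. A ring has local units if every finite subset $F$ admits an idempotent $e$ with $r=er=re$ for $r\in F$. Inverse semigroups: $E(S)$ idempotents, $s\le t$ iff $s=ts^*s$; $\mathcal{I}(Z)$ is the inverse semigroup of partial bijections of a set $Z$; a partial homomorphism $\varphi$ satisfies $\varphi(s^* )=\varphi(s)^*$, $\varphi(s)\varphi(t)\le\varphi(st)$, $s\le t\Rightarrow\varphi(s)\le\varphi(t)$. An algebraic partial action of $S$ on an $R$-algebra $A$: ideals $D_s$, $R$-algebra isomorphisms $\alpha_s:D_{s^*}\to D_s$, $s\mapsto\alpha_s$ a partial homomorphism $S\to\mathcal{I}(A)$, and $A=\operatorname{span}_R\bigcup_{e\in E(S)}D_e$. A topological partial action of $S$ on $X$: open $X_s$, homeomorphisms $\theta_s:X_{s^*}\to X_s$, $s\mapsto\theta_s$ a partial homomorphism $S\to\mathcal{I}(X)$, $X=\bigcup_{e\in E(S)}X_e$. Its dual partial action on $A_R(X)$: $D_s=\{f:\operatorname{supp}f\subseteq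 X_s\}$, $\alpha_s(f)=f\circ\theta_{s^*}$ on $X_s$, extended by zero. *)

theory Defs
  imports "HOL-Analysis.Analysis"
begin

definition indecomposable_ring :: "'r::comm_ring_1 itself \<Rightarrow> bool" where
  "indecomposable_ring _ \<longleftrightarrow> (\<forall>e::'r. e * e = e \<longrightarrow> e = 0 \<or> e = 1)"

definition locally_compact_space_ty :: "'x::topological_space itself \<Rightarrow> bool" where
  "locally_compact_space_ty _ \<longleftrightarrow>
     (\<forall>x::'x. \<exists>U K. open U \<and> compact K \<and> x \<in> U \<and> U \<subseteq> K)"

definition zero_dimensional_ty :: "'x::topological_space itself \<Rightarrow> bool" where
  "zero_dimensional_ty _ \<longleftrightarrow>
     (\<forall>U (x::'x). open U \<and> x \<in> U \<longrightarrow> (\<exists>V. open V \<and> closed V \<and> x \<in> V \<and> V \<subseteq> U))"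

definition supp :: "('x \<Rightarrow> 'r::zero) \<Rightarrow> 'x set" where
  "supp f = {x. f x \<noteq> 0}"

definition locally_constant :: "('x::topological_space \<Rightarrow> 'r) \<Rightarrow> bool" where
  "locally_constant f \<longleftrightarrow> (\<forall>x. \<exists>U. open U \<and> x \<in> U \<and> (\<forall>y\<in>U. f y = f x))"

definition A_R :: "('x::topological_space \<Rightarrow> 'r::comm_ring_1) set" where
  "A_R = {f. locally_constant f \<and> compact (closure (supp f))}"

definition inverse_semigroup :: "('s \<Rightarrow> 's \<Rightarrow> 's) \<Rightarrow> ('s \<Rightarrow> 's) \<Rightarrow> bool" where
  "inverse_semigroup mul st \<longleftrightarrow>
     (\<forall>a b c. mul (mul a b) c = mul a (mul b c)) \<and>
     (\<forall>s. mul (mul s (st s)) s = s) \<and>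
     (\<forall>s. mul (mul (st s) s) (st s) = st s) \<and>
     (\<forall>e f. mul e e = e \<and> mul f f = f \<longrightarrow> mul e f = mul f e)"

definition idems :: "('s \<Rightarrow> 's \<Rightarrow> 's) \<Rightarrow> 's set" where
  "idems mul = {e. mul e e = e}"

definition isg_le :: "('s \<Rightarrow> 's \<Rightarrow> 's) \<Rightarrow> ('s \<Rightarrow> 's) \<Rightarrow> 's \<Rightarrow> 's \<Rightarrow> bool" where
  "isg_le mul st s t \<longleftrightarrow> s = mul t (mul (st s) s)"

text \<open>A family of partial bijections phi_s : Dom (s^*) -> Dom s of a set Z (given by
  the sets Dom s and maps f s, only relevant on Dom (s^*)) forming a partial
  homomorphism S -> I(Z): phi(s^*) = phi(s)^*, phi(s) phi(t) \<le> phi(st), and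
  s \<le> t implies phi(s) \<le> phi(t) (order of I(Z) = restriction).\<close>
definition partial_hom_pb ::
  "('s \<Rightarrow> 's \<Rightarrow> 's) \<Rightarrow> ('s \<Rightarrow> 's) \<Rightarrow> ('s \<Rightarrow> 'z set) \<Rightarrow> ('s \<Rightarrow> 'z \<Rightarrow> 'z) \<Rightarrow> bool" where
  "partial_hom_pb mul st Dom f \<longleftrightarrow>
     (\<forall>s. bij_betw (f s) (Dom (st s)) (Dom s)) \<and>
     (\<forall>s. \<forall>a\<in>Dom (st s). f (st s) (f s a) = a) \<and>
     (\<forall>s t a. a \<in> Dom (st t) \<and> f t a \<in> Dom (st s) \<longrightarrow>
          a \<in> Dom (st (mul s t)) \<and> f (mul s t) a = f s (f t a)) \<and>
     (\<forall>s t. isg_le mul st s t \<longrightarrow>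
          Dom (st s) \<subseteq> Dom (st t) \<and> (\<forall>a\<in>Dom (st s). f s a = f t a))"

definition alg_ideal :: "('x::topological_space \<Rightarrow> 'r::comm_ring_1) set \<Rightarrow> bool" where
  "alg_ideal I \<longleftrightarrow> I \<subseteq> A_R \<and> (\<lambda>_. 0) \<in> I \<and>
     (\<forall>f\<in>I. \<forall>g\<in>I. (\<lambda>x. f x + g x) \<in> I) \<and>
     (\<forall>f\<in>I. (\<lambda>x. - f x) \<in> I) \<and>
     (\<forall>c. \<forall>f\<in>I. (\<lambda>x. c * f x) \<in> I) \<and>
     (\<forall>f\<in>I. \<forall>g\<in>A_R. (\<lambda>x. g x * f x) \<in> I \<and> (\<lambda>x. f x * g x) \<in> I)"

definition alg_iso_on :: "(('x \<Rightarrow> 'r::comm_ring_1) \<Rightarrow> ('x \<Rightarrow> 'r)) \<Rightarrow> ('x \<Rightarrow> 'r) set \<Rightarrow> ('x \<Rightarrow> 'r) set \<Rightarrow> bool" where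
  "alg_iso_on h I J \<longleftrightarrow> bij_betw h I J \<and>
     (\<forall>f\<in>I. \<forall>g\<in>I. h (\<lambda>x. f x + g x) = (\<lambda>x. h f x + h g x)) \<and>
     (\<forall>f\<in>I. \<forall>g\<in>I. h (\<lambda>x. f x * g x) = (\<lambda>x. h f x * h g x)) \<and>
     (\<forall>c. \<forall>f\<in>I. h (\<lambda>x. c * f x) = (\<lambda>x. c * h f x))"

definition has_local_units :: "('x \<Rightarrow> 'r::comm_ring_1) set \<Rightarrow> bool" where
  "has_local_units I \<longleftrightarrow> (\<forall>F. finite F \<and> F \<subseteq> I \<longrightarrow>
     (\<exists>e\<in>I. (\<lambda>x. e x * e x) = e \<and>
        (\<forall>r\<in>F. (\<lambda>x. e x * r x) = r \<and> (\<lambda>x. r x * e x) = r)))"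

definition alg_partial_action ::
  "('s \<Rightarrow> 's \<Rightarrow> 's) \<Rightarrow> ('s \<Rightarrow> 's) \<Rightarrow> ('s \<Rightarrow> ('x::topological_space \<Rightarrow> 'r::comm_ring_1) set)
    \<Rightarrow> ('s \<Rightarrow> ('x \<Rightarrow> 'r) \<Rightarrow> ('x \<Rightarrow> 'r)) \<Rightarrow> bool" where
  "alg_partial_action mul st D \<alpha> \<longleftrightarrow>
     (\<forall>s. alg_ideal (D s)) \<and>
     (\<forall>s. alg_iso_on (\<alpha> s) (D (st s)) (D s)) \<and>
     partial_hom_pb mul st D \<alpha> \<and>
     (\<forall>g\<in>A_R. \<exists>F c. finite F \<and> F \<subseteq> (\<Union>e\<in>idems mul. D e) \<and>
         g = (\<lambda>x. \<Sum>h\<in>F. c h * h x))"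

definition top_partial_action ::
  "('s \<Rightarrow> 's \<Rightarrow> 's) \<Rightarrow> ('s \<Rightarrow> 's) \<Rightarrow> ('s \<Rightarrow> 'x::topological_space set) \<Rightarrow> ('s \<Rightarrow> 'x \<Rightarrow> 'x) \<Rightarrow> bool" where
  "top_partial_action mul st Xs \<theta> \<longleftrightarrow>
     (\<forall>s. open (Xs s)) \<and>
     (\<forall>s. \<exists>g. homeomorphism (Xs (st s)) (Xs s) (\<theta> s) g) \<and>
     partial_hom_pb mul st Xs \<theta> \<and>
     (\<Union>e\<in>idems mul. Xs e) = UNIV"

definition is_dual_action ::
  "('s \<Rightarrow> 's) \<Rightarrow> ('s \<Rightarrow> 'x::topological_space set) \<Rightarrow> ('s \<Rightarrow> 'x \<Rightarrow> 'x)
    \<Rightarrow> ('s \<Rightarrow> ('x \<Rightarrow> 'r::comm_ring_1) set) \<Rightarrow> ('s \<Rightarrow> ('x \<Rightarrow> 'r) \<Rightarrow> ('x \<Rightarrow> 'r)) \<Rightarrow> bool" where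
  "is_dual_action st Xs \<theta> D \<alpha> \<longleftrightarrow>
     (\<forall>s. D s = {f\<in>A_R. supp f \<subseteq> Xs s}) \<and>
     (\<forall>s. \<forall>f\<in>D (st s). \<alpha> s f = (\<lambda>x. if x \<in> Xs s then f (\<theta> (st s) x) else 0))"

end

theory Submission
  imports Defs
begin

text \<open>An ideal of \<open>A\<^sub>R(X)\<close> with local units over an indecomposable ring consists of all
  functions supported in the union \<open>X\<^sub>s\<close> of the supports of its members. For \<open>x \<in> X\<^sub>s\<^sub>*\<close>,
  \<open>f \<mapsto> \<alpha>\<^sub>s\<^sub>*(f)(x)\<close> is a nonzero character of \<open>A\<^sub>R(X\<^sub>s)\<close>. Such a character is evaluation at a
  point: it sends indicators of compact open sets to 0 or 1, and those sent to 1 have the finite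
  intersection property, so they share a point. This point is \<open>\<theta>\<^sub>s(x)\<close>; the axioms of a
  partial action and continuity are transported from \<alpha> to \<theta> by testing against indicators
  of compact open neighbourhoods.\<close>

lemma idempotent_eq_0_or_1:
  assumes "indecomposable_ring TYPE('r::comm_ring_1)" and "(e::'r) * e = e"
  shows "e = 0 \<or> e = 1"
  using assms unfolding indecomposable_ring_def by blast

text \<open>Both \<open>s\<close> and \<open>s\<^sup>*\<^sup>*\<close> are inverses of \<open>s\<^sup>*\<close>; the computation below is the usual proof
  that inverses are unique, which rests on the commutation of the idempotents \<open>s s\<^sup>*\<close>, \<open>s\<^sup>*\<^sup>* s\<^sup>*\<close>
  and of \<open>s\<^sup>* s\<close>, \<open>s\<^sup>* s\<^sup>*\<^sup>*\<close>.\<close>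
lemma inverse_semigroup_st_st:
  assumes "inverse_semigroup mul st"
  shows "st (st s) = s"
proof -
  define a where "a = st s"
  define y where "y = st a"
  have assoc: "\<And>p q r. mul (mul p q) r = mul p (mul q r)"
    and regular: "\<And>p. mul (mul p (st p)) p = p"
    and regular': "\<And>p. mul (mul (st p) p) (st p) = st p"
    and idem_comm: "\<And>e f. mul e e = e \<Longrightarrow> mul f f = f \<Longrightarrow> mul e f = mul f e"
    using assms unfolding inverse_semigroup_def by blast+
  have s: "mul s (mul a s) = s" using regular[of s] assoc a_def by metis
  have a: "mul a (mul s a) = a" using regular'[of s] assoc a_def by metis
  have a': "mul a (mul y a) = a" using regular[of a] assoc y_def by metis
  have y: "mul y (mul a y) = y" using regular'[of a] assoc y_def by metis
  have comm1: "mul (mul s a) (mul y a) = mul (mul y a) (mul s a)"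
    using idem_comm a a' assoc by metis
  have comm2: "mul (mul a s) (mul a y) = mul (mul a y) (mul a s)"
    using idem_comm s y assoc by metis
  have "s = mul s (mul (mul a (mul y a)) s)" using s a' by simp
  also have "\<dots> = mul (mul (mul y a) (mul s a)) s" using comm1 assoc by metis
  also have "\<dots> = mul y (mul a s)" using s assoc by metis
  finally have s_eq: "s = mul y (mul a s)" .
  have "y = mul y (mul (mul a (mul s a)) y)" using y a by simp
  also have "\<dots> = mul y (mul (mul a y) (mul a s))" using comm2 assoc by metis
  also have "\<dots> = mul y (mul a s)" using y assoc by metis
  finally show ?thesis using s_eq unfolding y_def a_def by simp
qed

lemma locally_constant_open_preimage:
  assumes "locally_constant f"
  shows "open {x. P (f x)}"
  unfolding open_subopen[of "{x. P (f x)}"]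
proof
  fix x assume x: "x \<in> {x. P (f x)}"
  obtain U where U: "open U" "x \<in> U" "\<forall>y\<in>U. f y = f x"
    using assms unfolding locally_constant_def by blast
  have "U \<subseteq> {x. P (f x)}" using U(3) x by auto
  with U(1,2) show "\<exists>T. open T \<and> x \<in> T \<and> T \<subseteq> {x. P (f x)}" by blast
qed

lemma locally_constant_closed_preimage:
  assumes "locally_constant f"
  shows "closed {x. P (f x)}"
proof -
  have "closed {x. \<not> \<not> P (f x)}"
    by (rule closed_Collect_neg) (rule locally_constant_open_preimage[OF assms])
  then show ?thesis by simp
qed

lemma
  fixes f :: "'x::topological_space \<Rightarrow> 'r::comm_ring_1"
  assumes "f \<in> A_R"
  shows open_supp_A_R: "open (supp f)"
    and compact_supp_A_R: "compact (supp f)"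
proof -
  have "locally_constant f" using assms by (simp add: A_R_def)
  then have "open (supp f)" "closed (supp f)"
    unfolding supp_def
    by (fact locally_constant_open_preimage locally_constant_closed_preimage)+
  then show "open (supp f)" "compact (supp f)"
    using assms by (simp_all add: A_R_def closure_closed)
qed

lemma supp_indicator [simp]: "supp (indicator K :: 'x \<Rightarrow> 'r::zero_neq_one) = K"
  by (auto simp: supp_def indicator_eq_0_iff)

lemma indicator_in_A_R:
  assumes "compact K" "open (K::'x::t2_space set)"
  shows "(indicator K :: 'x \<Rightarrow> 'r::comm_ring_1) \<in> A_R"
proof -
  have closed: "closed K" using assms compact_imp_closed by blast
  have "locally_constant (indicator K :: 'x \<Rightarrow> 'r)"
    unfolding locally_constant_def
  proof
    fix x
    show "\<exists>U. open U \<and> x \<in> U \<and> (\<forall>y\<in>U. (indicator K y :: 'r) = indicator K x)"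
    proof (cases "x \<in> K")
      case True then show ?thesis using assms(2) by (intro exI[of _ K]) simp
    next
      case False then show ?thesis using closed by (intro exI[of _ "- K"]) (simp add: closed_def)
    qed
  qed
  then show ?thesis using assms closed by (simp add: A_R_def closure_closed)
qed

lemma compact_open_nbhd:
  assumes "locally_compact_space_ty TYPE('x::t2_space)" "zero_dimensional_ty TYPE('x)"
    and "open W" "(x::'x) \<in> W"
  obtains K where "compact K" "open K" "x \<in> K" "K \<subseteq> W"
proof -
  obtain U0 K0 where U0: "open U0" "compact K0" "x \<in> U0" "U0 \<subseteq> K0"
    using assms(1) unfolding locally_compact_space_ty_def by blast
  have "open (W \<inter> U0)" "x \<in> W \<inter> U0" using U0 assms(3,4) by auto
  then obtain V where V: "open V" "closed V" "x \<in> V" "V \<subseteq> W \<inter> U0"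
    using assms(2) unfolding zero_dimensional_ty_def by blast
  have "compact (K0 \<inter> V)" using U0(2) V(2) by (rule compact_Int_closed)
  moreover have "K0 \<inter> V = V" using U0(4) V(4) by blast
  ultimately have "compact V" by simp
  with V show thesis by (intro that) auto
qed

text \<open>For open \<open>V\<close> this is \<open>A\<^sub>R(V)\<close>, its functions extended by zero to all of \<open>X\<close>.\<close>
definition A_R_on :: "'x::topological_space set \<Rightarrow> ('x \<Rightarrow> 'r::comm_ring_1) set" where
  "A_R_on V = {f \<in> A_R. supp f \<subseteq> V}"

lemma indicator_in_A_R_on:
  assumes "compact K" "open (K::'x::t2_space set)" "K \<subseteq> V"
  shows "(indicator K :: 'x \<Rightarrow> 'r::comm_ring_1) \<in> A_R_on V"
  using assms indicator_in_A_R by (simp add: A_R_on_def)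

lemma ideal_with_local_units_eq_A_R_on:
  fixes I :: "('x::topological_space \<Rightarrow> 'r::comm_ring_1) set"
  assumes indec: "indecomposable_ring TYPE('r)"
    and ideal: "alg_ideal I" and units: "has_local_units I"
  shows "I = A_R_on (\<Union> (supp ` I))"
proof
  show "I \<subseteq> A_R_on (\<Union> (supp ` I))"
    using ideal unfolding alg_ideal_def A_R_on_def by blast
next
  show "A_R_on (\<Union> (supp ` I)) \<subseteq> I"
  proof
    fix f :: "'x \<Rightarrow> 'r" assume "f \<in> A_R_on (\<Union> (supp ` I))"
    then have f: "f \<in> A_R" "supp f \<subseteq> (\<Union>g\<in>I. supp g)" by (auto simp: A_R_on_def)
    have "\<And>g. g \<in> I \<Longrightarrow> open (supp g)"
      using ideal open_supp_A_R unfolding alg_ideal_def by blast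
    then obtain G where G: "G \<subseteq> I" "finite G" "supp f \<subseteq> (\<Union>g\<in>G. supp g)"
      using compactE_image[OF compact_supp_A_R[OF f(1)]] f(2) by metis
    then obtain e where e: "e \<in> I" "(\<lambda>x. e x * e x) = e"
      "\<forall>g\<in>G. (\<lambda>x. e x * g x) = g"
      using units unfolding has_local_units_def by meson
    have e_one: "e x = 1" if x: "x \<in> supp f" for x
    proof -
      obtain g where g: "g \<in> G" "g x \<noteq> 0" using G(3) x unfolding supp_def by blast
      have "e x * g x = g x" using e(3) g(1) by metis
      then have "e x \<noteq> 0" using g(2) by auto
      moreover have "e x * e x = e x" using e(2) by metis
      ultimately show "e x = 1" using idempotent_eq_0_or_1[OF indec] by blast
    qed
    have "(\<lambda>x. f x * e x) = f"
    proof
      fix x show "f x * e x = f x"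
        using e_one[of x] by (cases "f x = 0") (simp_all add: supp_def)
    qed
    moreover have "(\<lambda>x. f x * e x) \<in> I" using ideal e(1) f(1) unfolding alg_ideal_def by blast
    ultimately show "f \<in> I" by simp
  qed
qed

lemma A_R_on_separates_points:
  assumes "locally_compact_space_ty TYPE('x::t2_space)" "zero_dimensional_ty TYPE('x)"
    and "open V" "y \<in> V" "y' \<in> V"
    and "\<And>g::'x \<Rightarrow> 'r::comm_ring_1. g \<in> A_R_on V \<Longrightarrow> g y = g y'"
  shows "y = y'"
proof (rule ccontr)
  assume "y \<noteq> y'"
  then have "open (V - {y'})" "y \<in> V - {y'}" using assms(3,4) by auto
  then obtain K where K: "compact K" "open K" "y \<in> K" "K \<subseteq> V - {y'}"
    using compact_open_nbhd[OF assms(1,2)] by metis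
  then have "(indicator K :: 'x \<Rightarrow> 'r) \<in> A_R_on V" by (intro indicator_in_A_R_on) auto
  then have "(indicator K y :: 'r) = indicator K y'" by (rule assms(6))
  moreover have "y' \<notin> K" using K(4) by blast
  ultimately show False using K(3) by simp
qed

context
  fixes \<phi> :: "('x::t2_space \<Rightarrow> 'r::comm_ring_1) \<Rightarrow> 'r" and V :: "'x set"
  assumes indec: "indecomposable_ring TYPE('r)"
    and add: "\<And>f g. f \<in> A_R_on V \<Longrightarrow> g \<in> A_R_on V \<Longrightarrow> \<phi> (\<lambda>x. f x + g x) = \<phi> f + \<phi> g"
    and mult: "\<And>f g. f \<in> A_R_on V \<Longrightarrow> g \<in> A_R_on V \<Longrightarrow> \<phi> (\<lambda>x. f x * g x) = \<phi> f * \<phi> g"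
begin

lemma character_indicator_Int:
  assumes "compact L" "open L" "L \<subseteq> V" "compact M" "open M" "M \<subseteq> V"
  shows "\<phi> (indicator (L \<inter> M)) = \<phi> (indicator L) * \<phi> (indicator M)"
  using mult[OF indicator_in_A_R_on indicator_in_A_R_on, OF assms]
  by (simp add: indicator_inter_arith[abs_def])

lemma character_indicator_01:
  assumes "compact L" "open L" "L \<subseteq> V"
  shows "\<phi> (indicator L) = 0 \<or> \<phi> (indicator L) = 1"
  using character_indicator_Int[OF assms assms] idempotent_eq_0_or_1[OF indec] by simp

lemma character_indicator_empty: "\<phi> (indicator {}) = 0"
proof -
  have empty: "indicator {} = (\<lambda>x::'x. 0::'r)" by (simp add: fun_eq_iff)
  have "(indicator {} :: 'x \<Rightarrow> 'r) \<in> A_R_on V" by (rule indicator_in_A_R_on) auto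
  with empty have zero: "(\<lambda>x. 0::'r) \<in> A_R_on V" by simp
  have "\<phi> (\<lambda>x. 0) = \<phi> (\<lambda>x. 0) + \<phi> (\<lambda>x. 0)"
    using add[OF zero zero] by (simp only: add_0)
  then show ?thesis using empty by simp
qed

lemma character_indicator_split:
  assumes K: "compact K" "open K" "K \<subseteq> V" and L: "compact L" "open L"
  shows "\<phi> (indicator K) = \<phi> (indicator (K \<inter> L)) + \<phi> (indicator (K - L))"
proof -
  have "closed L" using L compact_imp_closed by blast
  have "compact (K \<inter> - L)" using K L by (intro compact_Int_closed closed_Compl) auto
  then have "(indicator (K - L) :: 'x \<Rightarrow> 'r) \<in> A_R_on V"
    using K \<open>closed L\<close> by (intro indicator_in_A_R_on) (auto simp: Diff_eq open_Diff)
  moreover have "(indicator (K \<inter> L) :: 'x \<Rightarrow> 'r) \<in> A_R_on V"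
    using K L \<open>closed L\<close> by (intro indicator_in_A_R_on) (auto intro: compact_Int_closed)
  moreover have "(indicator K :: 'x \<Rightarrow> 'r) = (\<lambda>x. indicator (K \<inter> L) x + indicator (K - L) x)"
    by (simp add: fun_eq_iff split: split_indicator)
  ultimately show ?thesis using add by metis
qed

lemma character_on_indicators:
  assumes g0: "g0 \<in> A_R_on V" "\<phi> g0 \<noteq> 0"
  obtains y where "y \<in> supp g0"
    and "\<And>L. compact L \<Longrightarrow> open L \<Longrightarrow> L \<subseteq> V \<Longrightarrow> \<phi> (indicator L) = indicator L y"
proof -
  define K0 where "K0 = supp g0"
  have K0: "compact K0" "open K0" "K0 \<subseteq> V"
    using g0(1) open_supp_A_R compact_supp_A_R unfolding K0_def A_R_on_def by blast+
  have "(\<lambda>x. g0 x * indicator K0 x) = g0" by (auto simp: K0_def supp_def indicator_def)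
  then have "\<phi> g0 = \<phi> g0 * \<phi> (indicator K0)"
    using mult[OF g0(1) indicator_in_A_R_on[OF K0]] by simp
  then have K0_one: "\<phi> (indicator K0) = 1" using character_indicator_01[OF K0] g0(2) by auto
  define F where "F = {L. compact L \<and> open L \<and> L \<subseteq> V \<and> \<phi> (indicator L) = 1}"
  have F_Int: "K0 \<inter> \<Inter>F' \<in> F" if "finite F'" "F' \<subseteq> F" for F'
    using that
  proof (induction F' rule: finite_induct)
    case empty then show ?case using K0 K0_one by (simp add: F_def)
  next
    case (insert L F')
    then have "L \<in> F" "K0 \<inter> \<Inter>F' \<in> F" by auto
    then have "L \<inter> (K0 \<inter> \<Inter>F') \<in> F"
      unfolding F_def using character_indicator_Int compact_Int_closed compact_imp_closed by auto
    moreover have "K0 \<inter> \<Inter>(insert L F') = L \<inter> (K0 \<inter> \<Inter>F')" by auto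
    ultimately show ?case by simp
  qed
  have "K0 \<inter> \<Inter>F \<noteq> {}"
  proof (rule compact_imp_fip)
    show "closed L" if "L \<in> F" for L using that compact_imp_closed unfolding F_def by blast
    show "K0 \<inter> \<Inter>F' \<noteq> {}" if "finite F'" "F' \<subseteq> F" for F'
      using F_Int[OF that] character_indicator_empty unfolding F_def by auto
  qed (use K0 in blast)
  then obtain y where y: "y \<in> K0" "\<And>L. L \<in> F \<Longrightarrow> y \<in> L" by blast
  have "\<phi> (indicator L) = indicator L y" if L: "compact L" "open L" "L \<subseteq> V" for L
  proof (cases "y \<in> L")
    case True
    have "\<phi> (indicator (K0 - L)) \<noteq> 1"
    proof
      assume "\<phi> (indicator (K0 - L)) = 1"
      moreover have "compact (K0 - L)"
        using compact_Int_closed[OF K0(1) closed_Compl[OF L(2)]] by (simp add: Diff_eq)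
      moreover have "open (K0 - L)" using K0(2) compact_imp_closed[OF L(1)] by (rule open_Diff)
      moreover have "K0 - L \<subseteq> V" using K0(3) by blast
      ultimately have "K0 - L \<in> F" unfolding F_def by blast
      then show False using y(2) True by blast
    qed
    then have "\<phi> (indicator L) \<noteq> 0"
      using character_indicator_split[OF K0 L(1,2)] character_indicator_Int[OF K0 L] K0_one by auto
    then show ?thesis using character_indicator_01[OF L] True by auto
  next
    case False
    then have "L \<notin> F" using y(2) by blast
    then show ?thesis using character_indicator_01[OF L] L False unfolding F_def by auto
  qed
  with y(1) show thesis unfolding K0_def by (intro that) auto
qed

lemma character_is_point_evaluation:
  assumes scale: "\<And>c f. f \<in> A_R_on V \<Longrightarrow> \<phi> (\<lambda>x. c * f x) = c * \<phi> f"
    and g0: "g0 \<in> A_R_on V" "\<phi> g0 \<noteq> 0"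
  shows "\<exists>y\<in>V. \<forall>g\<in>A_R_on V. \<phi> g = g y"
proof -
  obtain y where y: "y \<in> supp g0"
    and ind: "\<And>L. compact L \<Longrightarrow> open L \<Longrightarrow> L \<subseteq> V \<Longrightarrow> \<phi> (indicator L) = indicator L y"
    using character_on_indicators[OF g0] by metis
  have "\<phi> g = g y" if g: "g \<in> A_R_on V" for g
  proof -
    \<comment> \<open>On the compact open level set of \<open>g\<close> through \<open>y\<close>, \<open>g\<close> is the constant \<open>g y\<close>.\<close>
    define L where "L = supp g0 \<inter> {x. g x = g y}"
    have lc: "locally_constant g" using g by (simp add: A_R_on_def A_R_def)
    have "compact (supp g0)" "open (supp g0)" "supp g0 \<subseteq> V"
      using g0(1) compact_supp_A_R open_supp_A_R by (auto simp: A_R_on_def)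
    moreover have "open {x. g x = g y}" "closed {x. g x = g y}"
      using locally_constant_open_preimage[OF lc, of "\<lambda>v. v = g y"]
        locally_constant_closed_preimage[OF lc, of "\<lambda>v. v = g y"] by blast+
    ultimately have L: "compact L" "open L" "L \<subseteq> V"
      unfolding L_def by (auto intro: compact_Int_closed)
    have "y \<in> L" using y by (simp add: L_def)
    then have "\<phi> (indicator L) = 1" using ind[OF L] by simp
    have "(\<lambda>x. g x * indicator L x) = (\<lambda>x. g y * indicator L x)"
      by (auto simp: L_def indicator_def)
    then have "\<phi> g * \<phi> (indicator L) = g y * \<phi> (indicator L)"
      using mult[OF g indicator_in_A_R_on[OF L]] scale[OF indicator_in_A_R_on[OF L]] by metis
    then show ?thesis using \<open>\<phi> (indicator L) = 1\<close> by simp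
  qed
  moreover have "y \<in> V" using y g0(1) by (auto simp: A_R_on_def)
  ultimately show ?thesis by blast
qed

end

locale algebraic_partial_action_on_A_R =
  fixes mul :: "'s \<Rightarrow> 's \<Rightarrow> 's" and st :: "'s \<Rightarrow> 's"
    and D :: "'s \<Rightarrow> ('x::t2_space \<Rightarrow> 'r::comm_ring_1) set"
    and \<alpha> :: "'s \<Rightarrow> ('x \<Rightarrow> 'r) \<Rightarrow> ('x \<Rightarrow> 'r)"
  assumes indecomposable: "indecomposable_ring TYPE('r)"
    and locally_compact: "locally_compact_space_ty TYPE('x)"
    and zero_dimensional: "zero_dimensional_ty TYPE('x)"
    and inverse_semigroup: "inverse_semigroup mul st"
    and partial_action: "alg_partial_action mul st D \<alpha>"
    and local_units: "\<forall>s. has_local_units (D s)"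
begin

lemma st_st [simp]: "st (st s) = s"
  using inverse_semigroup by (rule inverse_semigroup_st_st)

definition U :: "'s \<Rightarrow> 'x set" where
  "U s = \<Union> (supp ` D s)"

lemma D_eq: "D s = A_R_on (U s)"
  unfolding U_def
  using ideal_with_local_units_eq_A_R_on[OF indecomposable] partial_action local_units
  unfolding alg_partial_action_def by blast

lemma D_subset_A_R: "f \<in> D s \<Longrightarrow> f \<in> A_R"
  by (simp add: D_eq A_R_on_def)

lemma supp_subset_U: "f \<in> D s \<Longrightarrow> supp f \<subseteq> U s"
  by (simp add: D_eq A_R_on_def)

lemma D_memI: "f \<in> A_R \<Longrightarrow> supp f \<subseteq> U s \<Longrightarrow> f \<in> D s"
  by (simp add: D_eq A_R_on_def)

lemma open_U: "open (U s)"
  unfolding U_def using D_subset_A_R open_supp_A_R by blast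

lemma indicator_in_D: "compact K \<Longrightarrow> open K \<Longrightarrow> K \<subseteq> U s \<Longrightarrow> indicator K \<in> D s"
  by (simp add: D_eq indicator_in_A_R_on)

lemma mult_in_D: "f \<in> D s \<Longrightarrow> h \<in> A_R \<Longrightarrow> (\<lambda>x. h x * f x) \<in> D s"
  using partial_action unfolding alg_partial_action_def alg_ideal_def by blast

lemma
  assumes "f \<in> D (st s)" "g \<in> D (st s)"
  shows \<alpha>_add: "\<alpha> s (\<lambda>x. f x + g x) = (\<lambda>x. \<alpha> s f x + \<alpha> s g x)"
    and \<alpha>_mult: "\<alpha> s (\<lambda>x. f x * g x) = (\<lambda>x. \<alpha> s f x * \<alpha> s g x)"
  using assms partial_action unfolding alg_partial_action_def alg_iso_on_def by blast+

lemma \<alpha>_scale: "f \<in> D (st s) \<Longrightarrow> \<alpha> s (\<lambda>x. c * f x) = (\<lambda>x. c * \<alpha> s f x)"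
  using partial_action unfolding alg_partial_action_def alg_iso_on_def by blast

lemma \<alpha>_in_D: "f \<in> D (st s) \<Longrightarrow> \<alpha> s f \<in> D s"
  using partial_action unfolding alg_partial_action_def alg_iso_on_def bij_betw_def by blast

lemma \<alpha>_st_\<alpha>: "f \<in> D (st s) \<Longrightarrow> \<alpha> (st s) (\<alpha> s f) = f"
  using partial_action unfolding alg_partial_action_def partial_hom_pb_def by blast

lemma \<alpha>_\<alpha>_st: "g \<in> D s \<Longrightarrow> \<alpha> s (\<alpha> (st s) g) = g"
  using \<alpha>_st_\<alpha>[of g "st s"] by simp

lemma \<alpha>_comp:
  "f \<in> D (st t) \<Longrightarrow> \<alpha> t f \<in> D (st s) \<Longrightarrow> f \<in> D (st (mul s t)) \<and> \<alpha> (mul s t) f = \<alpha> s (\<alpha> t f)"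
  using partial_action unfolding alg_partial_action_def partial_hom_pb_def by blast

lemma \<alpha>_mono:
  "isg_le mul st s t \<Longrightarrow> D (st s) \<subseteq> D (st t) \<and> (\<forall>f\<in>D (st s). \<alpha> s f = \<alpha> t f)"
  using partial_action unfolding alg_partial_action_def partial_hom_pb_def by blast

lemma evaluation_after_\<alpha>_is_point_evaluation:
  assumes x: "x \<in> U (st s)"
  shows "\<exists>y\<in>U s. \<forall>f\<in>D (st s). \<alpha> s f y = f x"
proof -
  obtain K where K: "compact K" "open K" "x \<in> K" "K \<subseteq> U (st s)"
    using compact_open_nbhd[OF locally_compact zero_dimensional open_U x] by metis
  have g0: "\<alpha> s (indicator K) \<in> A_R_on (U s)" "\<alpha> (st s) (\<alpha> s (indicator K)) x = 1"
    using \<alpha>_in_D \<alpha>_st_\<alpha> indicator_in_D[OF K(1,2,4)] K(3) by (auto simp: D_eq[symmetric])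
  have "\<exists>y\<in>U s. \<forall>g\<in>A_R_on (U s). \<alpha> (st s) g x = g y"
    using \<alpha>_add[of _ "st s"] \<alpha>_mult[of _ "st s"] \<alpha>_scale[of _ "st s"] g0
    by (intro character_is_point_evaluation[where V = "U s", OF indecomposable])
      (auto simp: D_eq[symmetric])
  then obtain y where y: "y \<in> U s" "\<And>g. g \<in> D s \<Longrightarrow> \<alpha> (st s) g x = g y"
    by (auto simp: D_eq)
  have "\<alpha> s f y = f x" if "f \<in> D (st s)" for f
    using y(2)[OF \<alpha>_in_D[OF that]] \<alpha>_st_\<alpha>[OF that] by simp
  with y(1) show ?thesis by blast
qed

definition \<theta> :: "'s \<Rightarrow> 'x \<Rightarrow> 'x" where
  "\<theta> s x = (THE y. y \<in> U s \<and> (\<forall>f\<in>D (st s). \<alpha> s f y = f x))"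

lemma \<theta>_unique:
  assumes "y \<in> U s" "y' \<in> U s"
    and "\<forall>f\<in>D (st s). \<alpha> s f y = f x" "\<forall>f\<in>D (st s). \<alpha> s f y' = f x"
  shows "y = y'"
proof (rule A_R_on_separates_points[OF locally_compact zero_dimensional open_U assms(1,2)])
  fix g :: "'x \<Rightarrow> 'r" assume "g \<in> A_R_on (U s)"
  then have "g \<in> D s" by (simp add: D_eq)
  then show "g y = g y'"
    using assms(3,4) \<alpha>_in_D[of g "st s"] \<alpha>_\<alpha>_st[of g s] by force
qed

lemma \<theta>_props:
  assumes "x \<in> U (st s)"
  shows "\<theta> s x \<in> U s" "\<forall>f\<in>D (st s). \<alpha> s f (\<theta> s x) = f x"
proof -
  have "\<exists>!y. y \<in> U s \<and> (\<forall>f\<in>D (st s). \<alpha> s f y = f x)"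
    using evaluation_after_\<alpha>_is_point_evaluation[OF assms] \<theta>_unique by blast
  from theI'[OF this] show "\<theta> s x \<in> U s" "\<forall>f\<in>D (st s). \<alpha> s f (\<theta> s x) = f x"
    unfolding \<theta>_def by auto
qed

lemma \<theta>_eqI:
  "x \<in> U (st s) \<Longrightarrow> y \<in> U s \<Longrightarrow> \<forall>f\<in>D (st s). \<alpha> s f y = f x \<Longrightarrow> \<theta> s x = y"
  using \<theta>_unique \<theta>_props by blast

text \<open>Since \<open>\<alpha> s\<close> is multiplicative, testing against functions supported in one
  compact open neighbourhood of \<open>x\<close> already determines \<open>\<theta> s x\<close>.\<close>
lemma \<theta>_eqI_local:
  assumes L: "compact L" "open L" "x \<in> L" "L \<subseteq> U (st s)"
    and eval: "\<And>f. f \<in> D (st s) \<Longrightarrow> supp f \<subseteq> L \<Longrightarrow> \<alpha> s f y = f x"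
  shows "\<theta> s x = y"
proof -
  have L_in: "indicator L \<in> D (st s)" using indicator_in_D L by blast
  have L_one: "\<alpha> s (indicator L) y = 1" using eval[OF L_in] L(3) by simp
  then have "y \<in> U s" using supp_subset_U[OF \<alpha>_in_D[OF L_in]] by (auto simp: supp_def)
  moreover have "\<alpha> s f y = f x" if f: "f \<in> D (st s)" for f
  proof -
    let ?g = "\<lambda>z. indicator L z * f z"
    have g: "?g \<in> D (st s)" using mult_in_D[OF f indicator_in_A_R[OF L(1,2)]] .
    have "supp ?g \<subseteq> L" by (auto simp: supp_def split: split_indicator)
    then have "\<alpha> s ?g y = f x" using eval[OF g] L(3) by simp
    moreover have "\<alpha> s ?g y = \<alpha> s f y" using \<alpha>_mult[OF L_in f] L_one by simp
    ultimately show ?thesis by simp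
  qed
  ultimately show ?thesis using \<theta>_eqI L by blast
qed

lemma \<theta>_st_\<theta>:
  assumes x: "x \<in> U (st s)"
  shows "\<theta> (st s) (\<theta> s x) = x"
proof (rule \<theta>_eqI)
  show "\<theta> s x \<in> U (st (st s))" using \<theta>_props(1)[OF x] by simp
  show "\<forall>g\<in>D (st (st s)). \<alpha> (st s) g x = g (\<theta> s x)"
    using \<theta>_props(2)[OF x] \<alpha>_in_D[of _ "st s"] \<alpha>_\<alpha>_st by fastforce
qed (use x in simp)

lemma \<theta>_\<theta>_st: "y \<in> U s \<Longrightarrow> \<theta> s (\<theta> (st s) y) = y"
  using \<theta>_st_\<theta>[of y "st s"] by simp

lemma bij_betw_\<theta>: "bij_betw (\<theta> s) (U (st s)) (U s)"
proof (rule bij_betw_byWitness[where f' = "\<theta> (st s)"])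
  show "\<theta> s ` U (st s) \<subseteq> U s" using \<theta>_props(1) by blast
  show "\<theta> (st s) ` U s \<subseteq> U (st s)" using \<theta>_props(1)[of _ "st s"] by auto
qed (simp_all add: \<theta>_st_\<theta> \<theta>_\<theta>_st)

lemma \<theta>_preimage_compact_open:
  assumes K: "compact K" "open K" "K \<subseteq> U s"
  shows "{z \<in> U (st s). \<theta> s z \<in> K} = supp (\<alpha> (st s) (indicator K))"
proof -
  let ?f = "\<alpha> (st s) (indicator K)"
  have f: "?f \<in> D (st s)" using \<alpha>_in_D[of _ "st s"] indicator_in_D[OF K] by simp
  have f_eq: "?f z = indicator K (\<theta> s z)" if "z \<in> U (st s)" for z
    using \<theta>_props(2)[OF that] f \<alpha>_\<alpha>_st[OF indicator_in_D[OF K]] by metis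
  show ?thesis
  proof (rule set_eqI)
    fix z
    show "z \<in> {z \<in> U (st s). \<theta> s z \<in> K} \<longleftrightarrow> z \<in> supp ?f"
      using supp_subset_U[OF f] f_eq[of z]
      by (cases "z \<in> U (st s)") (auto simp: supp_def split: split_indicator)
  qed
qed

lemma continuous_on_\<theta>: "continuous_on (U (st s)) (\<theta> s)"
  unfolding continuous_on_topological
proof (intro ballI allI impI)
  fix x B assume x: "x \<in> U (st s)" and B: "open B" "\<theta> s x \<in> B"
  have "open (B \<inter> U s)" "\<theta> s x \<in> B \<inter> U s" using B open_U \<theta>_props(1)[OF x] by auto
  then obtain K where K: "compact K" "open K" "\<theta> s x \<in> K" "K \<subseteq> B \<inter> U s"
    using compact_open_nbhd[OF locally_compact zero_dimensional] by metis
  let ?A = "supp (\<alpha> (st s) (indicator K))"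
  have A: "?A = {z \<in> U (st s). \<theta> s z \<in> K}"
    using \<theta>_preimage_compact_open[OF K(1,2)] K(4) by auto
  have "indicator K \<in> D s" using indicator_in_D[OF K(1,2)] K(4) by blast
  then have "\<alpha> (st s) (indicator K) \<in> D (st s)" using \<alpha>_in_D[of _ "st s"] by simp
  then have "open ?A" by (intro open_supp_A_R D_subset_A_R)
  moreover have "x \<in> ?A" using A x K(3) by blast
  moreover have "\<forall>y\<in>U (st s). y \<in> ?A \<longrightarrow> \<theta> s y \<in> B" using A K(4) by blast
  ultimately show "\<exists>A. open A \<and> x \<in> A \<and> (\<forall>y\<in>U (st s). y \<in> A \<longrightarrow> \<theta> s y \<in> B)" by blast
qed

lemma homeomorphism_\<theta>: "homeomorphism (U (st s)) (U s) (\<theta> s) (\<theta> (st s))"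
  unfolding homeomorphism_def
  using continuous_on_\<theta>[of s] continuous_on_\<theta>[of "st s"]
    bij_betw_imp_surj_on[OF bij_betw_\<theta>[of s]] bij_betw_imp_surj_on[OF bij_betw_\<theta>[of "st s"]]
    \<theta>_st_\<theta> \<theta>_\<theta>_st
  by simp

lemma \<theta>_comp:
  assumes a: "a \<in> U (st t)" and b: "\<theta> t a \<in> U (st s)"
  shows "a \<in> U (st (mul s t)) \<and> \<theta> (mul s t) a = \<theta> s (\<theta> t a)"
proof -
  define b where "b = \<theta> t a"
  have "open (U t \<inter> U (st s))" by (intro open_Int open_U)
  moreover have "b \<in> U t \<inter> U (st s)" using \<theta>_props(1)[OF a] b by (simp add: b_def)
  ultimately obtain L where L: "compact L" "open L" "b \<in> L" "L \<subseteq> U t \<inter> U (st s)"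
    by (rule compact_open_nbhd[OF locally_compact zero_dimensional])
  have transport: "\<alpha> (st t) h \<in> D (st (mul s t)) \<and> \<alpha> (mul s t) (\<alpha> (st t) h) = \<alpha> s h
      \<and> \<alpha> (st t) h a = h b"
    if h: "h \<in> D (st s)" "supp h \<subseteq> L" for h
  proof -
    have "h \<in> D t" using D_memI[OF D_subset_A_R[OF h(1)]] h(2) L(4) by auto
    then have g: "\<alpha> (st t) h \<in> D (st t)" "\<alpha> t (\<alpha> (st t) h) = h"
      using \<alpha>_in_D[of h "st t"] \<alpha>_\<alpha>_st[of h t] by simp_all
    have "\<alpha> t (\<alpha> (st t) h) (\<theta> t a) = \<alpha> (st t) h a" using \<theta>_props(2)[OF a] g(1) by blast
    then show ?thesis using \<alpha>_comp[OF g(1)] g(2) h(1) unfolding b_def by simp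
  qed
  have "indicator L \<in> D (st s)" using indicator_in_D L by blast
  then have "\<alpha> (st t) (indicator L) \<in> D (st (mul s t))" "\<alpha> (st t) (indicator L) a = 1"
    using transport L(3) by auto
  then have a': "a \<in> U (st (mul s t))" using supp_subset_U by (force simp: supp_def)
  have "\<theta> s b = \<theta> (mul s t) a"
  proof (rule \<theta>_eqI_local[OF L(1-3)])
    show "L \<subseteq> U (st s)" using L(4) by blast
    show "\<alpha> s h (\<theta> (mul s t) a) = h b" if "h \<in> D (st s)" "supp h \<subseteq> L" for h
      using transport[OF that] \<theta>_props(2)[OF a'] by metis
  qed
  with a' show ?thesis unfolding b_def by simp
qed

lemma \<theta>_mono:
  assumes le: "isg_le mul st s t"
  shows "U (st s) \<subseteq> U (st t) \<and> (\<forall>a\<in>U (st s). \<theta> s a = \<theta> t a)"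
proof -
  have D: "D (st s) \<subseteq> D (st t)" "\<forall>f\<in>D (st s). \<alpha> s f = \<alpha> t f" using \<alpha>_mono[OF le] by auto
  then have U: "U (st s) \<subseteq> U (st t)" unfolding U_def by blast
  have "\<theta> t a = \<theta> s a" if a: "a \<in> U (st s)" for a
  proof -
    obtain L where L: "compact L" "open L" "a \<in> L" "L \<subseteq> U (st s)"
      using compact_open_nbhd[OF locally_compact zero_dimensional open_U a] by metis
    show ?thesis
    proof (rule \<theta>_eqI_local[OF L(1-3)])
      show "L \<subseteq> U (st t)" using L(4) U by blast
      show "\<alpha> t h (\<theta> s a) = h a" if "h \<in> D (st t)" "supp h \<subseteq> L" for h
      proof -
        have "h \<in> D (st s)" using D_memI[OF D_subset_A_R[OF that(1)]] that(2) L(4) by auto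
        then show ?thesis using D(2) \<theta>_props(2)[OF a] by metis
      qed
    qed
  qed
  with U show ?thesis by simp
qed

lemma partial_hom_pb_\<theta>: "partial_hom_pb mul st U \<theta>"
  unfolding partial_hom_pb_def
  using bij_betw_\<theta> \<theta>_st_\<theta> \<theta>_comp \<theta>_mono by blast

lemma U_cover: "(\<Union>e\<in>idems mul. U e) = UNIV"
proof -
  have "x \<in> (\<Union>e\<in>idems mul. U e)" for x
  proof -
    obtain K where K: "compact K" "open K" "x \<in> K"
      using compact_open_nbhd[OF locally_compact zero_dimensional, of UNIV x] by auto
    obtain F c where F: "F \<subseteq> (\<Union>e\<in>idems mul. D e)" "indicator K = (\<lambda>x. \<Sum>h\<in>F. c h * h x)"
      using partial_action indicator_in_A_R[OF K(1,2)]
      unfolding alg_partial_action_def by blast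
    have "(\<Sum>h\<in>F. c h * h x) = 1" using fun_cong[OF F(2), of x] K(3) by simp
    then obtain h where "h \<in> F" "c h * h x \<noteq> 0"
      by (metis (mono_tags, lifting) sum.neutral zero_neq_one)
    then have "h \<in> F" "h x \<noteq> 0" by auto
    with F(1) supp_subset_U show ?thesis by (fastforce simp: supp_def)
  qed
  then show ?thesis by blast
qed

lemma \<alpha>_eq_dual:
  assumes f: "f \<in> D (st s)"
  shows "\<alpha> s f = (\<lambda>x. if x \<in> U s then f (\<theta> (st s) x) else 0)"
proof
  fix x
  show "\<alpha> s f x = (if x \<in> U s then f (\<theta> (st s) x) else 0)"
  proof (cases "x \<in> U s")
    case True
    then have "\<theta> (st s) x \<in> U (st s)" "\<theta> s (\<theta> (st s) x) = x"
      using \<theta>_props(1)[of x "st s"] \<theta>_\<theta>_st by auto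
    then show ?thesis using \<theta>_props(2) f True by metis
  next
    case False
    then show ?thesis using supp_subset_U[OF \<alpha>_in_D[OF f]] by (auto simp: supp_def)
  qed
qed

lemma top_partial_action_\<theta>: "top_partial_action mul st U \<theta>"
  unfolding top_partial_action_def
  using open_U homeomorphism_\<theta> partial_hom_pb_\<theta> U_cover by blast

lemma is_dual_action_\<theta>: "is_dual_action st U \<theta> D \<alpha>"
  unfolding is_dual_action_def using D_eq \<alpha>_eq_dual by (simp add: A_R_on_def)

end

theorem proposition6p4:
  fixes mul :: "'s \<Rightarrow> 's \<Rightarrow> 's" and st :: "'s \<Rightarrow> 's"
    and D :: "'s \<Rightarrow> ('x::t2_space \<Rightarrow> 'r::comm_ring_1) set"
    and \<alpha> :: "'s \<Rightarrow> ('x \<Rightarrow> 'r) \<Rightarrow> ('x \<Rightarrow> 'r)"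
  assumes "indecomposable_ring TYPE('r)"
    and "locally_compact_space_ty TYPE('x)"
    and "zero_dimensional_ty TYPE('x)"
    and "inverse_semigroup mul st"
    and "alg_partial_action mul st D \<alpha>"
    and "\<forall>s. has_local_units (D s)"
  shows "\<exists>Xs \<theta>. top_partial_action mul st Xs \<theta> \<and> is_dual_action st Xs \<theta> D \<alpha>"
proof -
  interpret algebraic_partial_action_on_A_R mul st D \<alpha>
    using assms by (simp add: algebraic_partial_action_on_A_R_def)
  show ?thesis using top_partial_action_\<theta> is_dual_action_\<theta> by blast
qed

end
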